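(* Consider the sample versions of the stable CPC-like and stable MPC-like algorithms for LWF chain graphs, in which each conditional independence query "$u\perp\!\!\!\perp v\mid S$" is answered by a fixed (possibly erroneous) deterministic rule depending only on $(u,v,S)$, symmetric in $u,v$. Then the decisions about U-structures (which edges are unambiguous and which are oriented as complex arrows in the complex recovery phase) do not depend on the ordering $\mathrm{order}(V)$ of the variables. Moreover, the outputs of the sample versions of the stable CPC-like and stable MPC-like algorithms are entirely independent of $\mathrm{order}(V)$.
   Context: Let $V$ be a finite set of variables. Stable skeleton recovery with ordering $\mathrm{order}(V)$: start with the complete undirected graph $H$ on $V$; for $i=0,\dots,|V|-2$, first store $a_H(x)$ := current adjacency set of each vertex $x$, then while possible select (in an order determined by $\mathrm{order}(V)$) an ordered pair $(u,v)$, still adjacent in $H$, with $u\in a_H(v)$ and $|a_H(u)\setminus\{v\}|\ge i$; if some $S\subseteq a_H(u)\setminus\{v\}$ with $|S|=i$ is judged to satisfy $u\perp\!\!\!\perp v\mid S$, remove $u-v$ from $H$. The sets $a_H$ are not updated within a level. Complex recovery (CPC-like): set $H^*=H$. For each pair $u,v$ non-adjacent in $H$, determine all separating sets, i.e. all $S\subseteq ad_H(u)$ judged to satisfy $u\perp\!\!\!\perp v\mid S$. An edge $u-w$ of $H^*$ is unambiguous if at least one separating set exists and either for every separating set $S$, $u\perp\!\!\!\perp v\mid S\cup\{w\}$ is judged to hold, or for none of them; otherwise it is ambiguous (and marked). An unambiguous $u-w$ is oriented $u\to w$ iff for no separating set $S$ is $u\perp\!\!\!\perp v\mid S\cup\{w\}$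 judged to hold. MPC-like with parameters $0\le\alpha\le\beta\le100$: $u-w$ is unambiguous if at least one separating set exists and the percentage of separating sets $S$ with $u\perp\!\!\!\perp v\mid S\cup\{w\}$ judged to hold is at most $\alpha$ or at least $\beta$; an unambiguous $u-w$ is oriented $u\to w$ iff that percentage is less than $\alpha$. Pattern step: for each pair of arrows $u_1\to w_1$, $u_2\to w_2$ of $H^*$ with $u_1\neq u_2$, label both as complex arrows if there is an undirected path in $H^*$ from $w_1$ to $w_2$ none of whose intermediate vertices is adjacent to $u_1$ or $u_2$; afterwards all unlabeled arrows are made undirected. The output is the resulting graph, with ambiguous edges marked. The stable CPC-like (resp. stable MPC-like) algorithm is stable skeleton recovery followed by CPC-like (resp. MPC-like) complex recovery and the pattern step. *)

theory Defs
  imports Complex_Main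
begin

text \<open>An undirected graph on a vertex set V is a set of 2-element subsets (edges).\<close>

definition adj :: "'a set set \<Rightarrow> 'a \<Rightarrow> 'a set" where
  "adj E u = {w. {u, w} \<in> E \<and> w \<noteq> u}"

definition complete_graph :: "'a set \<Rightarrow> 'a set set" where
  "complete_graph V = {{u, v} | u v. u \<in> V \<and> v \<in> V \<and> u \<noteq> v}"

definition is_ordering :: "'a set \<Rightarrow> 'a list \<Rightarrow> bool" where
  "is_ordering V ord \<longleftrightarrow> distinct ord \<and> set ord = V"

text \<open>The order in which ordered pairs are selected within a level is determined by
  order(V) through an arbitrary selection rule sel, required to enumerate all ordered
  pairs of distinct variables.\<close>

definition valid_sel :: "'a set \<Rightarrow> ('a list \<Rightarrow> ('a \<times> 'a) list) \<Rightarrow> bool" where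
  "valid_sel V sel \<longleftrightarrow>
     (\<forall>ord. is_ordering V ord \<longrightarrow> set (sel ord) = {(u, v). u \<in> V \<and> v \<in> V \<and> u \<noteq> v})"

text \<open>One selection step at level i; A is the adjacency function stored at the
  beginning of the level (not updated within the level).\<close>

definition level_step ::
  "('a \<Rightarrow> 'a \<Rightarrow> 'a set \<Rightarrow> bool) \<Rightarrow> nat \<Rightarrow> ('a \<Rightarrow> 'a set) \<Rightarrow> 'a set set \<Rightarrow> 'a \<times> 'a \<Rightarrow> 'a set set" where
  "level_step indep i A E p = (case p of (u, v) \<Rightarrow>
     if {u, v} \<in> E \<and> u \<in> A v \<and> i \<le> card (A u - {v})
        \<and> (\<exists>S. S \<subseteq> A u - {v} \<and> card S = i \<and> indep u v S)
     then E - {{u, v}} else E)"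

definition skel_level ::
  "('a list \<Rightarrow> ('a \<times> 'a) list) \<Rightarrow> ('a \<Rightarrow> 'a \<Rightarrow> 'a set \<Rightarrow> bool) \<Rightarrow> 'a list \<Rightarrow> nat
     \<Rightarrow> 'a set set \<Rightarrow> 'a set set" where
  "skel_level sel indep ord i E = fold (\<lambda>p E'. level_step indep i (adj E) E' p) (sel ord) E"

definition stable_skeleton ::
  "('a list \<Rightarrow> ('a \<times> 'a) list) \<Rightarrow> ('a \<Rightarrow> 'a \<Rightarrow> 'a set \<Rightarrow> bool) \<Rightarrow> 'a set \<Rightarrow> 'a list \<Rightarrow> 'a set set" where
  "stable_skeleton sel indep V ord =
     fold (skel_level sel indep ord) [0..<card V - 1] (complete_graph V)"

definition sepsets :: "('a \<Rightarrow> 'a \<Rightarrow> 'a set \<Rightarrow> bool) \<Rightarrow> 'a set set \<Rightarrow> 'a \<Rightarrow> 'a \<Rightarrow> 'a set set" where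
  "sepsets indep H u v = {S. S \<subseteq> adj H u \<and> indep u v S}"

text \<open>Candidate triple: u, v non-adjacent in H and u - w an edge of H* (= H).\<close>

definition cand :: "'a set \<Rightarrow> 'a set set \<Rightarrow> 'a \<Rightarrow> 'a \<Rightarrow> 'a \<Rightarrow> bool" where
  "cand V H u v w \<longleftrightarrow> u \<in> V \<and> v \<in> V \<and> u \<noteq> v \<and> {u, v} \<notin> H \<and> {u, w} \<in> H \<and> u \<noteq> w"

definition cpc_unamb :: "('a \<Rightarrow> 'a \<Rightarrow> 'a set \<Rightarrow> bool) \<Rightarrow> 'a set set \<Rightarrow> 'a \<Rightarrow> 'a \<Rightarrow> 'a \<Rightarrow> bool" where
  "cpc_unamb indep H u v w \<longleftrightarrow> sepsets indep H u v \<noteq> {} \<and>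
     ((\<forall>S\<in>sepsets indep H u v. indep u v (S \<union> {w})) \<or>
      (\<forall>S\<in>sepsets indep H u v. \<not> indep u v (S \<union> {w})))"

definition cpc_orient :: "('a \<Rightarrow> 'a \<Rightarrow> 'a set \<Rightarrow> bool) \<Rightarrow> 'a set set \<Rightarrow> 'a \<Rightarrow> 'a \<Rightarrow> 'a \<Rightarrow> bool" where
  "cpc_orient indep H u v w \<longleftrightarrow> cpc_unamb indep H u v w \<and>
     (\<forall>S\<in>sepsets indep H u v. \<not> indep u v (S \<union> {w}))"

definition cpc_unamb_triples :: "'a set \<Rightarrow> ('a \<Rightarrow> 'a \<Rightarrow> 'a set \<Rightarrow> bool) \<Rightarrow> 'a set set \<Rightarrow> ('a \<times> 'a \<times> 'a) set" where
  "cpc_unamb_triples V indep H = {(u, v, w). cand V H u v w \<and> cpc_unamb indep H u v w}"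

definition cpc_arrows :: "'a set \<Rightarrow> ('a \<Rightarrow> 'a \<Rightarrow> 'a set \<Rightarrow> bool) \<Rightarrow> 'a set set \<Rightarrow> ('a \<times> 'a) set" where
  "cpc_arrows V indep H = {(u, w). \<exists>v. cand V H u v w \<and> cpc_orient indep H u v w}"

definition cpc_marked :: "'a set \<Rightarrow> ('a \<Rightarrow> 'a \<Rightarrow> 'a set \<Rightarrow> bool) \<Rightarrow> 'a set set \<Rightarrow> 'a set set" where
  "cpc_marked V indep H = {{u, w} | u w. \<exists>v. cand V H u v w \<and> \<not> cpc_unamb indep H u v w}"

definition mpc_pct :: "('a \<Rightarrow> 'a \<Rightarrow> 'a set \<Rightarrow> bool) \<Rightarrow> 'a set set \<Rightarrow> 'a \<Rightarrow> 'a \<Rightarrow> 'a \<Rightarrow> real" where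
  "mpc_pct indep H u v w =
     100 * real (card {S \<in> sepsets indep H u v. indep u v (S \<union> {w})})
         / real (card (sepsets indep H u v))"

definition mpc_unamb :: "real \<Rightarrow> real \<Rightarrow> ('a \<Rightarrow> 'a \<Rightarrow> 'a set \<Rightarrow> bool) \<Rightarrow> 'a set set \<Rightarrow> 'a \<Rightarrow> 'a \<Rightarrow> 'a \<Rightarrow> bool" where
  "mpc_unamb \<alpha> \<beta> indep H u v w \<longleftrightarrow> sepsets indep H u v \<noteq> {} \<and>
     (mpc_pct indep H u v w \<le> \<alpha> \<or> mpc_pct indep H u v w \<ge> \<beta>)"

definition mpc_orient :: "real \<Rightarrow> real \<Rightarrow> ('a \<Rightarrow> 'a \<Rightarrow> 'a set \<Rightarrow> bool) \<Rightarrow> 'a set set \<Rightarrow> 'a \<Rightarrow> 'a \<Rightarrow> 'a \<Rightarrow> bool" where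
  "mpc_orient \<alpha> \<beta> indep H u v w \<longleftrightarrow> mpc_unamb \<alpha> \<beta> indep H u v w \<and> mpc_pct indep H u v w < \<alpha>"

definition mpc_unamb_triples :: "real \<Rightarrow> real \<Rightarrow> 'a set \<Rightarrow> ('a \<Rightarrow> 'a \<Rightarrow> 'a set \<Rightarrow> bool) \<Rightarrow> 'a set set \<Rightarrow> ('a \<times> 'a \<times> 'a) set" where
  "mpc_unamb_triples \<alpha> \<beta> V indep H = {(u, v, w). cand V H u v w \<and> mpc_unamb \<alpha> \<beta> indep H u v w}"

definition mpc_arrows :: "real \<Rightarrow> real \<Rightarrow> 'a set \<Rightarrow> ('a \<Rightarrow> 'a \<Rightarrow> 'a set \<Rightarrow> bool) \<Rightarrow> 'a set set \<Rightarrow> ('a \<times> 'a) set" where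
  "mpc_arrows \<alpha> \<beta> V indep H = {(u, w). \<exists>v. cand V H u v w \<and> mpc_orient \<alpha> \<beta> indep H u v w}"

definition mpc_marked :: "real \<Rightarrow> real \<Rightarrow> 'a set \<Rightarrow> ('a \<Rightarrow> 'a \<Rightarrow> 'a set \<Rightarrow> bool) \<Rightarrow> 'a set set \<Rightarrow> 'a set set" where
  "mpc_marked \<alpha> \<beta> V indep H = {{u, w} | u w. \<exists>v. cand V H u v w \<and> \<not> mpc_unamb \<alpha> \<beta> indep H u v w}"

text \<open>H* is represented by the skeleton H together with the set Arr of arrows (u, w),
  meaning u -> w on the edge {u, w}. An edge is undirected if it carries no arrow.\<close>

definition und_edge :: "'a set set \<Rightarrow> ('a \<times> 'a) set \<Rightarrow> 'a \<Rightarrow> 'a \<Rightarrow> bool" where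
  "und_edge H Arr x y \<longleftrightarrow> {x, y} \<in> H \<and> x \<noteq> y \<and> (x, y) \<notin> Arr \<and> (y, x) \<notin> Arr"

definition und_path :: "'a set set \<Rightarrow> ('a \<times> 'a) set \<Rightarrow> 'a list \<Rightarrow> 'a \<Rightarrow> 'a \<Rightarrow> bool" where
  "und_path H Arr P a b \<longleftrightarrow> P \<noteq> [] \<and> hd P = a \<and> last P = b \<and> distinct P \<and>
     (\<forall>i. Suc i < length P \<longrightarrow> und_edge H Arr (P ! i) (P ! Suc i))"

definition complex_arrows :: "'a set set \<Rightarrow> ('a \<times> 'a) set \<Rightarrow> ('a \<times> 'a) set" where
  "complex_arrows H Arr = {(u1, w1) \<in> Arr. \<exists>u2 w2 P. (u2, w2) \<in> Arr \<and> u1 \<noteq> u2 \<and>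
      und_path H Arr P w1 w2 \<and>
      (\<forall>x \<in> set (butlast (tl P)). x \<notin> adj H u1 \<and> x \<notin> adj H u2)}"

text \<open>Output: (skeleton, complex arrows, marked ambiguous edges); every skeleton edge
  not carrying a complex arrow is undirected.\<close>

definition cpc_decisions where
  "cpc_decisions sel indep V ord = (let H = stable_skeleton sel indep V ord in
     (cpc_unamb_triples V indep H, cpc_arrows V indep H,
      complex_arrows H (cpc_arrows V indep H)))"

definition cpc_output where
  "cpc_output sel indep V ord = (let H = stable_skeleton sel indep V ord in
     (H, complex_arrows H (cpc_arrows V indep H), cpc_marked V indep H))"

definition mpc_decisions where
  "mpc_decisions \<alpha> \<beta> sel indep V ord = (let H = stable_skeleton sel indep V ord in
     (mpc_unamb_triples \<alpha> \<beta> V indep H, mpc_arrows \<alpha> \<beta> V indep H,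
      complex_arrows H (mpc_arrows \<alpha> \<beta> V indep H)))"

definition mpc_output where
  "mpc_output \<alpha> \<beta> sel indep V ord = (let H = stable_skeleton sel indep V ord in
     (H, complex_arrows H (mpc_arrows \<alpha> \<beta> V indep H), mpc_marked \<alpha> \<beta> V indep H))"

end

theory Submission
  imports Defs
begin

text \<open>Because the adjacency sets are frozen at the start of a level, the test applied to a
  pair does not depend on the deletions made earlier in the same level, and deleting a
  non-edge changes nothing. Hence a level removes exactly the edges of those selected pairs
  that pass the test: a set determined by the \<^emph>\<open>set\<close> of selected pairs, which is the same
  for every ordering. So the skeleton is order-independent, and the complex recovery and the
  pattern step are functions of the skeleton and the independence oracle alone.\<close>

lemma fold_Diff_eq_Diff_UNION:
  "fold (\<lambda>x A. A - f x) xs A = A - (\<Union>x\<in>set xs. f x)"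
  by (induction xs arbitrary: A) auto

lemma level_step_eq_Diff:
  "level_step indep i A E p = E - (case p of (u, v) \<Rightarrow>
     if u \<in> A v \<and> i \<le> card (A u - {v}) \<and> (\<exists>S. S \<subseteq> A u - {v} \<and> card S = i \<and> indep u v S)
     then {{u, v}} else {})"
  by (cases p) (simp add: level_step_def, blast)

lemma skel_level_eq_if_same_pairs:
  assumes "set (sel ord1) = set (sel ord2)"
  shows "skel_level sel indep ord1 = skel_level sel indep ord2"
  using assms by (intro ext) (simp add: skel_level_def level_step_eq_Diff fold_Diff_eq_Diff_UNION)

lemma stable_skeleton_order_independent:
  assumes "valid_sel V sel" "is_ordering V ord1" "is_ordering V ord2"
  shows "stable_skeleton sel indep V ord1 = stable_skeleton sel indep V ord2"
proof -
  have "set (sel ord1) = set (sel ord2)"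
    using assms unfolding valid_sel_def by simp
  then have "skel_level sel indep ord1 = skel_level sel indep ord2"
    by (rule skel_level_eq_if_same_pairs)
  then show ?thesis
    unfolding stable_skeleton_def by simp
qed

theorem theorem4:
  fixes V :: "'a set"
    and sel :: "'a list \<Rightarrow> ('a \<times> 'a) list"
    and indep :: "'a \<Rightarrow> 'a \<Rightarrow> 'a set \<Rightarrow> bool"
    and \<alpha> \<beta> :: real
    and ord1 ord2 :: "'a list"
  assumes "finite V"
    and "valid_sel V sel"
    and "\<forall>u v S. indep u v S = indep v u S"
    and "0 \<le> \<alpha>" and "\<alpha> \<le> \<beta>" and "\<beta> \<le> 100"
    and "is_ordering V ord1" and "is_ordering V ord2"
  shows "cpc_decisions sel indep V ord1 = cpc_decisions sel indep V ord2
       \<and> mpc_decisions \<alpha> \<beta> sel indep V ord1 = mpc_decisions \<alpha> \<beta> sel indep V ord2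
       \<and> cpc_output sel indep V ord1 = cpc_output sel indep V ord2
       \<and> mpc_output \<alpha> \<beta> sel indep V ord1 = mpc_output \<alpha> \<beta> sel indep V ord2"
proof -
  have "stable_skeleton sel indep V ord1 = stable_skeleton sel indep V ord2"
    using assms(2,7,8) by (rule stable_skeleton_order_independent)
  then show ?thesis
    unfolding cpc_decisions_def mpc_decisions_def cpc_output_def mpc_output_def by simp
qed

end
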